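(* For any $\epsilon\in(0,1)$, with probability at least $1-\delta$ over the i.i.d. sample $x_1,x_2,\dots\sim D_X$, \[V_{P,\pi,t}\le(1+\epsilon)\,\widehat V_{P,\pi,t}+\frac{7500}{\epsilon^3}K\] for all distributions $P$ over $\Pi$, all $\pi\in\Pi$, and all $t\ge 16K\log(8KN/\delta)$.
   Context: $A$ is a set of $K$ actions, $X$ a set of contexts, $\Pi$ a finite set of $N$ policies $\pi:X\to A$, $D_X$ a distribution on $X$, and $\delta\in(0,1)$. For a distribution $P$ over $\Pi$, $W_P(x,a)=\sum_{\pi:\pi(x)=a}P(\pi)$. Let $C_t=2\log(Nt/\delta)$ and $\mu_t=\min\{\frac1{2K},\sqrt{C_t/(2Kt)}\}$. For a distribution $P$ over $\Pi$, $\pi\in\Pi$ and $t\ge 2$, define $V_{P,\pi,t}=\mathbb{E}_{x\sim D_X}\bigl[1/((1-K\mu_t)W_P(x,\pi(x))+\mu_t)\bigr]$ and $\widehat V_{P,\pi,t}=\frac1{t-1}\sum_{i=1}^{t-1}1/((1-K\mu_t)W_P(x_i,\pi(x_i))+\mu_t)$. *)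

theory Defs
  imports "HOL-Probability.Probability"
begin

definition is_dist :: "('x \<Rightarrow> 'a) set \<Rightarrow> (('x \<Rightarrow> 'a) \<Rightarrow> real) \<Rightarrow> bool" where
  "is_dist Pol P \<longleftrightarrow> (\<forall>\<pi>\<in>Pol. 0 \<le> P \<pi>) \<and> (\<Sum>\<pi>\<in>Pol. P \<pi>) = 1"

definition W :: "('x \<Rightarrow> 'a) set \<Rightarrow> (('x \<Rightarrow> 'a) \<Rightarrow> real) \<Rightarrow> 'x \<Rightarrow> 'a \<Rightarrow> real" where
  "W Pol P x a = (\<Sum>\<pi>\<in>{\<pi>\<in>Pol. \<pi> x = a}. P \<pi>)"

definition C_t :: "nat \<Rightarrow> real \<Rightarrow> nat \<Rightarrow> real" where
  "C_t N \<delta> t = 2 * ln (real N * real t / \<delta>)"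

definition mu_t :: "nat \<Rightarrow> nat \<Rightarrow> real \<Rightarrow> nat \<Rightarrow> real" where
  "mu_t K N \<delta> t = min (1 / (2 * real K)) (sqrt (C_t N \<delta> t / (2 * real K * real t)))"

definition V :: "'x measure \<Rightarrow> ('x \<Rightarrow> 'a) set \<Rightarrow> nat \<Rightarrow> real \<Rightarrow>
    (('x \<Rightarrow> 'a) \<Rightarrow> real) \<Rightarrow> ('x \<Rightarrow> 'a) \<Rightarrow> nat \<Rightarrow> real" where
  "V D Pol K \<delta> P \<pi> t =
     (let \<mu> = mu_t K (card Pol) \<delta> t in
      \<integral>x. 1 / ((1 - real K * \<mu>) * W Pol P x (\<pi> x) + \<mu>) \<partial>D)"

definition V_hat :: "(nat \<Rightarrow> 'x) \<Rightarrow> ('x \<Rightarrow> 'a) set \<Rightarrow> nat \<Rightarrow> real \<Rightarrow>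
    (('x \<Rightarrow> 'a) \<Rightarrow> real) \<Rightarrow> ('x \<Rightarrow> 'a) \<Rightarrow> nat \<Rightarrow> real" where
  "V_hat xs Pol K \<delta> P \<pi> t =
     (let \<mu> = mu_t K (card Pol) \<delta> t in
      (1 / (real t - 1)) * (\<Sum>i=1..t-1. 1 / ((1 - real K * \<mu>) * W Pol P (xs i) (\<pi> (xs i)) + \<mu>)))"

end

theory Submission
  imports Defs
begin

(* V is the expectation of x |-> 1 / (a W_P(x, pi x) + mu) with a = 1 - K mu.  Replace P by the
   empirical distribution of m ~ 3 / (eps mu) independent draws from P (Maurey's sparsification):
   averaged over the draws, the resulting function is at least the original one (tangent line of
   1/x) and at most (1 + 1/(m mu)) <= 1 + eps/3 times it (second-order bound for 1/x plus the
   variance of an empirical frequency).  There are only N^m sparse distributions, so a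
   multiplicative Chernoff bound for the [0,1]-valued functions mu / (a w + mu), with a union bound
   over them, over pi and over the sample size t (confidence delta / (t (t + 1))), shows that with
   probability 1 - delta all their means are at most (1 + eps/3) times their empirical means plus a
   term of order log (N^m t^2 / delta) / (eps t).  Averaging the sandwich over the draws transfers
   this to V and its empirical counterpart, and the choice of mu and t >= 16 K log (8 K N / delta)
   bounds the additive term by 7500 K / eps^3. *)

section \<open>Expectations over independent draws\<close>

fun list_expect :: "('b \<Rightarrow> real) \<Rightarrow> 'b set \<Rightarrow> nat \<Rightarrow> ('b list \<Rightarrow> real) \<Rightarrow> real" where
  "list_expect p S 0 \<phi> = \<phi> []"
| "list_expect p S (Suc m) \<phi> = (\<Sum>j\<in>S. p j * list_expect p S m (\<lambda>ys. \<phi> (j # ys)))"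

lemma list_expect_add:
  "list_expect p S m (\<lambda>ys. \<phi> ys + \<psi> ys) = list_expect p S m \<phi> + list_expect p S m \<psi>"
  by (induction m arbitrary: \<phi> \<psi>) (simp_all add: distrib_left sum.distrib)

lemma list_expect_scale: "list_expect p S m (\<lambda>ys. c * \<phi> ys) = c * list_expect p S m \<phi>"
  by (induction m arbitrary: \<phi>) (simp_all add: sum_distrib_left algebra_simps)

lemma list_expect_zero: "list_expect p S m (\<lambda>_. 0) = 0"
  using list_expect_scale[of p S m 0 "\<lambda>_. 0"] by simp

lemma list_expect_sum:
  "finite I \<Longrightarrow> list_expect p S m (\<lambda>ys. \<Sum>i\<in>I. \<phi> i ys) = (\<Sum>i\<in>I. list_expect p S m (\<phi> i))"
  by (induction I rule: finite_induct) (simp_all add: list_expect_add list_expect_zero)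

lemma list_expect_const:
  assumes "(\<Sum>j\<in>S. p j) = 1"
  shows "list_expect p S m (\<lambda>_. c) = c"
  using assms by (induction m) (simp_all flip: sum_distrib_right)

lemma list_expect_cong:
  assumes "\<And>ys. set ys \<subseteq> S \<Longrightarrow> length ys = m \<Longrightarrow> \<phi> ys = \<psi> ys"
  shows "list_expect p S m \<phi> = list_expect p S m \<psi>"
  using assms
proof (induction m arbitrary: \<phi> \<psi>)
  case (Suc m)
  then show ?case
    unfolding list_expect.simps by (intro sum.cong refl arg_cong[where f="(*) _"] Suc.IH) auto
qed simp

lemma list_expect_mono:
  assumes "\<And>j. j \<in> S \<Longrightarrow> 0 \<le> p j"
    and "\<And>ys. set ys \<subseteq> S \<Longrightarrow> length ys = m \<Longrightarrow> \<phi> ys \<le> \<psi> ys"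
  shows "list_expect p S m \<phi> \<le> list_expect p S m \<psi>"
  using assms(2)
proof (induction m arbitrary: \<phi> \<psi>)
  case (Suc m)
  show ?case unfolding list_expect.simps
  proof (intro sum_mono mult_left_mono)
    fix j assume "j \<in> S"
    then show "list_expect p S m (\<lambda>ys. \<phi> (j # ys)) \<le> list_expect p S m (\<lambda>ys. \<psi> (j # ys))"
      using Suc by auto
    show "0 \<le> p j" using assms(1) \<open>j \<in> S\<close> .
  qed
qed simp

lemma
  assumes "\<And>ys. integrable M (\<phi> ys)"
  shows integrable_list_expect: "integrable M (\<lambda>x. list_expect p S m (\<lambda>ys. \<phi> ys x))"
    and integral_list_expect:
      "(\<integral>x. list_expect p S m (\<lambda>ys. \<phi> ys x) \<partial>M) = list_expect p S m (\<lambda>ys. \<integral>x. \<phi> ys x \<partial>M)"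
  using assms by (induction m arbitrary: \<phi>) (simp_all add: Bochner_Integration.integral_sum)

lemma list_expect_sum_list:
  assumes "(\<Sum>j\<in>S. p j) = 1"
  shows "list_expect p S m (\<lambda>ys. \<Sum>y\<leftarrow>ys. h y) = real m * (\<Sum>j\<in>S. p j * h j)"
proof (induction m)
  case (Suc m)
  have "list_expect p S (Suc m) (\<lambda>ys. \<Sum>y\<leftarrow>ys. h y)
      = (\<Sum>j\<in>S. p j * h j + p j * (real m * (\<Sum>j\<in>S. p j * h j)))"
    by (simp add: list_expect_add list_expect_const[OF assms] Suc distrib_left)
  also have "\<dots> = (\<Sum>j\<in>S. p j * h j) + real m * (\<Sum>j\<in>S. p j * h j)"
    by (simp add: sum.distrib assms flip: sum_distrib_right)
  finally show ?case by (simp add: algebra_simps)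
qed simp

lemma list_expect_sum_list_square_le:
  assumes p: "(\<Sum>j\<in>S. p j) = 1" "\<And>j. j \<in> S \<Longrightarrow> 0 \<le> p j"
    and h: "\<And>j. j \<in> S \<Longrightarrow> 0 \<le> h j \<and> h j \<le> 1"
  defines "w \<equiv> \<Sum>j\<in>S. p j * h j"
  shows "list_expect p S m (\<lambda>ys. (\<Sum>y\<leftarrow>ys. h y)\<^sup>2) \<le> real m * w + (real m)\<^sup>2 * w\<^sup>2"
proof (induction m)
  case (Suc m)
  have w0: "0 \<le> w" unfolding w_def using p h by (auto intro!: sum_nonneg)
  have step: "list_expect p S m (\<lambda>ys. (h j + (\<Sum>y\<leftarrow>ys. h y))\<^sup>2)
      = (h j)\<^sup>2 + 2 * h j * (real m * w) + list_expect p S m (\<lambda>ys. (\<Sum>y\<leftarrow>ys. h y)\<^sup>2)" for j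
  proof -
    have "(\<lambda>ys. (h j + (\<Sum>y\<leftarrow>ys. h y))\<^sup>2)
        = (\<lambda>ys. ((h j)\<^sup>2 + (2 * h j) * (\<Sum>y\<leftarrow>ys. h y)) + (\<Sum>y\<leftarrow>ys. h y)\<^sup>2)"
      by (simp add: power2_eq_square algebra_simps)
    then show ?thesis
      by (simp only: list_expect_add list_expect_scale list_expect_const[OF p(1)]
          list_expect_sum_list[OF p(1)] w_def)
  qed
  have "list_expect p S (Suc m) (\<lambda>ys. (\<Sum>y\<leftarrow>ys. h y)\<^sup>2)
      \<le> (\<Sum>j\<in>S. p j * h j * (1 + 2 * real m * w) + p j * (real m * w + (real m)\<^sup>2 * w\<^sup>2))"
  proof (simp add: step, intro sum_mono)
    fix j assume j: "j \<in> S"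
    have "(h j)\<^sup>2 \<le> h j" using h[OF j] by (simp add: power2_eq_square mult_left_le)
    moreover have "h j * (1 + 2 * real m * w) = h j + 2 * h j * (real m * w)"
      by (simp add: algebra_simps)
    ultimately have "(h j)\<^sup>2 + 2 * h j * (real m * w) + list_expect p S m (\<lambda>ys. (\<Sum>y\<leftarrow>ys. h y)\<^sup>2)
        \<le> h j * (1 + 2 * real m * w) + (real m * w + (real m)\<^sup>2 * w\<^sup>2)"
      using Suc by linarith
    from mult_left_mono[OF this p(2)[OF j]]
    show "p j * ((h j)\<^sup>2 + 2 * h j * (real m * w) + list_expect p S m (\<lambda>ys. (\<Sum>y\<leftarrow>ys. h y)\<^sup>2))
      \<le> p j * h j * (1 + 2 * real m * w) + p j * (real m * w + (real m)\<^sup>2 * w\<^sup>2)"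
      by (simp add: distrib_left mult.assoc)
  qed
  also have "\<dots> = w * (1 + 2 * real m * w) + (real m * w + (real m)\<^sup>2 * w\<^sup>2)"
    by (simp add: sum.distrib p(1) w_def flip: sum_distrib_right)
  also have "\<dots> \<le> real (Suc m) * w + (real (Suc m))\<^sup>2 * w\<^sup>2"
    using w0 by (simp add: power2_eq_square algebra_simps)
  finally show ?case .
qed simp

section \<open>Sparsification\<close>

lemma inverse_ge_tangent:
  fixes x c :: real
  assumes "0 < x" "0 < c"
  shows "1/c - (x - c)/c\<^sup>2 \<le> 1/x"
proof -
  have "1/x - (1/c - (x - c)/c\<^sup>2) = (x - c)\<^sup>2 / (c\<^sup>2 * x)"
    using assms by (simp add: field_simps power2_eq_square)
  moreover have "0 \<le> (x - c)\<^sup>2 / (c\<^sup>2 * x)" using assms by simp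
  ultimately show ?thesis by linarith
qed

lemma inverse_le_tangent_plus_square:
  fixes x c \<mu> :: real
  assumes "\<mu> \<le> x" "0 < \<mu>" "0 < c"
  shows "1/x \<le> 1/c - (x - c)/c\<^sup>2 + (x - c)\<^sup>2/(c\<^sup>2 * \<mu>)"
proof -
  have "0 < x" using assms by linarith
  then have "1/x - (1/c - (x - c)/c\<^sup>2) = (x - c)\<^sup>2 / (c\<^sup>2 * x)"
    using assms by (simp add: field_simps power2_eq_square)
  moreover have "(x - c)\<^sup>2 / (c\<^sup>2 * x) \<le> (x - c)\<^sup>2 / (c\<^sup>2 * \<mu>)"
    using assms \<open>0 < x\<close> by (intro divide_left_mono mult_left_mono) auto
  ultimately show ?thesis by linarith
qed

lemma inverse_affine_le_list_expect:
  assumes p: "(\<Sum>j\<in>S. p j) = 1" "\<And>j. j \<in> S \<Longrightarrow> 0 \<le> p j"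
    and h: "\<And>j. j \<in> S \<Longrightarrow> 0 \<le> h j"
    and "0 < m" "0 < a" "0 < \<mu>"
  shows "1 / (a * (\<Sum>j\<in>S. p j * h j) + \<mu>)
    \<le> list_expect p S m (\<lambda>ys. 1 / (a * ((\<Sum>y\<leftarrow>ys. h y) / real m) + \<mu>))"
proof -
  define w where "w = (\<Sum>j\<in>S. p j * h j)"
  define c where "c = a * w + \<mu>"
  have "0 \<le> w" unfolding w_def using p h by (auto intro!: sum_nonneg)
  then have c: "0 < c" using assms by (simp add: c_def add_nonneg_pos)
  have "list_expect p S m (\<lambda>ys. (1/c - (\<mu> - c)/c\<^sup>2) + (- a / (real m * c\<^sup>2)) * (\<Sum>y\<leftarrow>ys. h y))
      = (1/c - (\<mu> - c)/c\<^sup>2) + (- a / (real m * c\<^sup>2)) * (real m * w)"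
    by (simp only: list_expect_add list_expect_scale list_expect_const[OF p(1)]
        list_expect_sum_list[OF p(1)] w_def)
  also have "\<dots> = 1/c - (\<mu> - c + a * w)/c\<^sup>2"
    using \<open>0 < m\<close> by (simp add: diff_divide_distrib add_divide_distrib)
  also have "\<dots> = 1/c" by (simp add: c_def)
  finally have "1/c = list_expect p S m
      (\<lambda>ys. (1/c - (\<mu> - c)/c\<^sup>2) + (- a / (real m * c\<^sup>2)) * (\<Sum>y\<leftarrow>ys. h y))" ..
  also have "\<dots> \<le> list_expect p S m (\<lambda>ys. 1 / (a * ((\<Sum>y\<leftarrow>ys. h y) / real m) + \<mu>))"
  proof (rule list_expect_mono[OF p(2)])
    fix ys assume "set ys \<subseteq> S"
    then have "0 \<le> (\<Sum>y\<leftarrow>ys. h y)" using h by (force intro!: sum_list_nonneg)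
    then have "0 < a * ((\<Sum>y\<leftarrow>ys. h y) / real m) + \<mu>" using assms by (simp add: add_nonneg_pos)
    moreover have "(1/c - (\<mu> - c)/c\<^sup>2) + (- a / (real m * c\<^sup>2)) * (\<Sum>y\<leftarrow>ys. h y)
        = 1/c - (a * ((\<Sum>y\<leftarrow>ys. h y) / real m) + \<mu> - c)/c\<^sup>2"
      using \<open>0 < m\<close> c by (simp add: field_simps)
    ultimately show "(1/c - (\<mu> - c)/c\<^sup>2) + (- a / (real m * c\<^sup>2)) * (\<Sum>y\<leftarrow>ys. h y)
        \<le> 1 / (a * ((\<Sum>y\<leftarrow>ys. h y) / real m) + \<mu>)"
      using inverse_ge_tangent[OF _ c] by metis
  qed
  finally show ?thesis by (simp add: c_def w_def)
qed

lemma list_expect_sample_mean: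
  assumes "(\<Sum>j\<in>S. p j) = 1" "0 < m"
  shows "list_expect p S m (\<lambda>ys. (\<Sum>y\<leftarrow>ys. h y) / real m - w)
    = (\<Sum>j\<in>S. p j * h j) - w"
proof -
  have "list_expect p S m (\<lambda>ys. (1 / real m) * (\<Sum>y\<leftarrow>ys. h y) + (- w))
      = (1 / real m) * (real m * (\<Sum>j\<in>S. p j * h j)) - w"
    by (simp only: list_expect_add list_expect_scale list_expect_const[OF assms(1)]
        list_expect_sum_list[OF assms(1)])
  then show ?thesis using assms(2) by simp
qed

lemma list_expect_sample_mean_variance_le:
  assumes p: "(\<Sum>j\<in>S. p j) = 1" "\<And>j. j \<in> S \<Longrightarrow> 0 \<le> p j"
    and h: "\<And>j. j \<in> S \<Longrightarrow> 0 \<le> h j \<and> h j \<le> 1"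
    and "0 < m"
  defines "w \<equiv> \<Sum>j\<in>S. p j * h j"
  shows "list_expect p S m (\<lambda>ys. ((\<Sum>y\<leftarrow>ys. h y) / real m - w)\<^sup>2) \<le> w / real m"
proof -
  have "(\<lambda>ys. ((\<Sum>y\<leftarrow>ys. h y) / real m - w)\<^sup>2) = (\<lambda>ys. (1 / (real m)\<^sup>2) * (\<Sum>y\<leftarrow>ys. h y)\<^sup>2
      + ((- 2 * w / real m) * (\<Sum>y\<leftarrow>ys. h y) + w\<^sup>2))"
    using \<open>0 < m\<close> by (auto simp: power2_eq_square field_simps)
  then have "list_expect p S m (\<lambda>ys. ((\<Sum>y\<leftarrow>ys. h y) / real m - w)\<^sup>2)
      = (1 / (real m)\<^sup>2) * list_expect p S m (\<lambda>ys. (\<Sum>y\<leftarrow>ys. h y)\<^sup>2)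
        + ((- 2 * w / real m) * (real m * w) + w\<^sup>2)"
    by (simp only: list_expect_add list_expect_scale list_expect_const[OF p(1)]
        list_expect_sum_list[OF p(1)] w_def)
  also have "\<dots> \<le> (1 / (real m)\<^sup>2) * (real m * w + (real m)\<^sup>2 * w\<^sup>2)
        + ((- 2 * w / real m) * (real m * w) + w\<^sup>2)"
    using list_expect_sum_list_square_le[where m=m, OF p h]
    by (intro add_right_mono mult_left_mono) (simp_all add: w_def)
  also have "\<dots> = w / real m"
    using \<open>0 < m\<close> by (simp add: power2_eq_square field_simps)
  finally show ?thesis .
qed

lemma list_expect_inverse_affine_le:
  assumes p: "(\<Sum>j\<in>S. p j) = 1" "\<And>j. j \<in> S \<Longrightarrow> 0 \<le> p j"
    and h: "\<And>j. j \<in> S \<Longrightarrow> 0 \<le> h j \<and> h j \<le> 1"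
    and "0 < m" "0 < a" "a \<le> 1" "0 < \<mu>"
  shows "list_expect p S m (\<lambda>ys. 1 / (a * ((\<Sum>y\<leftarrow>ys. h y) / real m) + \<mu>))
    \<le> (1 + 1 / (real m * \<mu>)) * (1 / (a * (\<Sum>j\<in>S. p j * h j) + \<mu>))"
proof -
  define w where "w = (\<Sum>j\<in>S. p j * h j)"
  define c where "c = a * w + \<mu>"
  define dev where "dev ys = (\<Sum>y\<leftarrow>ys. h y) / real m - w" for ys
  have "0 \<le> w" unfolding w_def using p h by (auto intro!: sum_nonneg)
  then have c: "0 < c" using assms by (simp add: c_def add_nonneg_pos)
  have "list_expect p S m (\<lambda>ys. 1 / (a * ((\<Sum>y\<leftarrow>ys. h y) / real m) + \<mu>))
      \<le> list_expect p S m (\<lambda>ys. 1/c + (- a / c\<^sup>2) * dev ys + (a\<^sup>2 / (c\<^sup>2 * \<mu>)) * (dev ys)\<^sup>2)"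
  proof (rule list_expect_mono[OF p(2)])
    fix ys assume "set ys \<subseteq> S"
    then have "0 \<le> (\<Sum>y\<leftarrow>ys. h y)" using h by (force intro!: sum_list_nonneg)
    then have "\<mu> \<le> a * ((\<Sum>y\<leftarrow>ys. h y) / real m) + \<mu>" using assms by simp
    from inverse_le_tangent_plus_square[OF this \<open>0 < \<mu>\<close> c]
    show "1 / (a * ((\<Sum>y\<leftarrow>ys. h y) / real m) + \<mu>)
        \<le> 1/c + (- a / c\<^sup>2) * dev ys + (a\<^sup>2 / (c\<^sup>2 * \<mu>)) * (dev ys)\<^sup>2"
      by (simp add: dev_def c_def power2_eq_square field_simps)
  qed
  also have "\<dots> = 1/c + (a\<^sup>2 / (c\<^sup>2 * \<mu>)) * list_expect p S m (\<lambda>ys. (dev ys)\<^sup>2)"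
    using list_expect_sample_mean[OF p(1) \<open>0 < m\<close>, of h w]
    by (simp only: list_expect_add list_expect_scale list_expect_const[OF p(1)] dev_def w_def) simp
  also have "\<dots> \<le> 1/c + (a\<^sup>2 / (c\<^sup>2 * \<mu>)) * (w / real m)"
    using list_expect_sample_mean_variance_le[OF p h \<open>0 < m\<close>] \<open>0 < \<mu>\<close>
    by (intro add_left_mono mult_left_mono) (simp_all add: dev_def w_def)
  also have "\<dots> \<le> 1/c + (c / (c\<^sup>2 * \<mu>)) * (1 / real m)"
  proof -
    have "a\<^sup>2 * w \<le> a * w" using assms \<open>0 \<le> w\<close> by (simp add: power2_eq_square mult_left_le_one_le)
    also have "\<dots> \<le> c" using assms by (simp add: c_def)
    finally show ?thesis using c assms by (simp add: divide_right_mono)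
  qed
  also have "\<dots> = (1 + 1 / (real m * \<mu>)) * (1 / c)"
    using c by (simp add: power2_eq_square field_simps)
  finally show ?thesis by (simp add: c_def w_def)
qed

section \<open>A multiplicative Chernoff bound for i.i.d. samples\<close>

lemma (in product_prob_space) nn_integral_PiM_prod_finite:
  assumes "finite J" "J \<subseteq> I" "\<And>i. i \<in> J \<Longrightarrow> f i \<in> borel_measurable (M i)"
  shows "(\<integral>\<^sup>+x. (\<Prod>i\<in>J. f i (x i)) \<partial>PiM I M) = (\<Prod>i\<in>J. \<integral>\<^sup>+y. f i y \<partial>M i)"
proof -
  have "(\<integral>\<^sup>+x. (\<Prod>i\<in>J. f i (x i)) \<partial>PiM I M)
      = (\<integral>\<^sup>+x. (\<Prod>i\<in>J. f i (restrict x J i)) \<partial>PiM I M)"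
    by simp
  also have "\<dots> = (\<integral>\<^sup>+y. (\<Prod>i\<in>J. f i (y i)) \<partial>distr (PiM I M) (PiM J M) (\<lambda>x. restrict x J))"
    using assms by (intro nn_integral_distr[symmetric] measurable_restrict_subset) auto
  also have "\<dots> = (\<Prod>i\<in>J. \<integral>\<^sup>+y. f i y \<partial>M i)"
    using assms by (simp add: distr_PiM_restrict_finite product_nn_integral_prod)
  finally show ?thesis .
qed

lemma exp_neg_mult_le_chord:
  fixes l g :: real
  assumes "0 \<le> l" "0 \<le> g" "g \<le> 1"
  shows "exp (- l * g) \<le> 1 - (1 - exp (- l)) * g"
proof -
  have "exp (l * ((1 - g) *\<^sub>R 0 + g *\<^sub>R (-1))) \<le> (1 - g) * exp (l * 0) + g * exp (l * (-1))"
    by (rule convex_onD[OF convex_on_exp[OF assms(1)]]) (use assms in auto)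
  then show ?thesis by (simp add: algebra_simps)
qed

lemma div_one_plus_le_one_minus_exp_neg:
  fixes l :: real
  assumes "0 \<le> l"
  shows "l / (1 + l) \<le> 1 - exp (- l)"
proof -
  have "exp (- l) * (1 + l) \<le> exp (- l) * exp l"
    by (intro mult_left_mono exp_ge_add_one_self) simp
  then have "exp (- l) \<le> 1 / (1 + l)" using assms by (simp add: exp_minus field_simps)
  then show ?thesis using assms by (simp add: field_simps)
qed

lemma (in prob_space) expectation_exp_neg_mult_le:
  fixes g :: "'a \<Rightarrow> real"
  assumes [measurable]: "g \<in> borel_measurable M"
    and g: "\<And>x. 0 \<le> g x \<and> g x \<le> 1" and "0 \<le> l"
  shows "(\<integral>x. exp (- l * g x) \<partial>M) \<le> exp (- (l / (1 + l)) * (\<integral>x. g x \<partial>M))"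
proof -
  define c where "c = 1 - exp (- l)"
  have int_g: "integrable M g"
    using g by (intro integrable_const_bound[where B=1]) auto
  have "(\<integral>x. exp (- l * g x) \<partial>M) \<le> (\<integral>x. 1 - c * g x \<partial>M)"
  proof (rule integral_mono)
    show "integrable M (\<lambda>x. exp (- l * g x))"
      using g \<open>0 \<le> l\<close> by (intro integrable_const_bound[where B=1]) auto
    show "integrable M (\<lambda>x. 1 - c * g x)" using int_g by simp
    show "exp (- l * g x) \<le> 1 - c * g x" for x
      using g \<open>0 \<le> l\<close> exp_neg_mult_le_chord by (simp add: c_def)
  qed
  also have "\<dots> = 1 - c * (\<integral>x. g x \<partial>M)" using int_g by (simp add: prob_space)
  also have "\<dots> \<le> exp (- c * (\<integral>x. g x \<partial>M))" using exp_ge_add_one_self[of "- c * _"] by simp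
  also have "\<dots> \<le> exp (- (l / (1 + l)) * (\<integral>x. g x \<partial>M))"
  proof -
    have "0 \<le> (\<integral>x. g x \<partial>M)" using g by (simp add: integral_nonneg_AE)
    with div_one_plus_le_one_minus_exp_neg[OF \<open>0 \<le> l\<close>]
    have "(l / (1 + l)) * (\<integral>x. g x \<partial>M) \<le> c * (\<integral>x. g x \<partial>M)"
      unfolding c_def by (rule mult_right_mono)
    then show ?thesis by simp
  qed
  finally show ?thesis .
qed

lemma nn_integral_PiM_exp_neg_sum_le:
  fixes g :: "'x \<Rightarrow> real"
  assumes D: "prob_space D" and [measurable]: "g \<in> borel_measurable D"
    and g: "\<And>x. 0 \<le> g x \<and> g x \<le> 1" and "finite I" "0 \<le> l"
  shows "(\<integral>\<^sup>+xs. ennreal (exp (- l * (\<Sum>i\<in>I. g (xs i)))) \<partial>PiM UNIV (\<lambda>_::'i. D))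
    \<le> ennreal (exp (- (l / (1 + l)) * (\<integral>x. g x \<partial>D)) ^ card I)"
proof -
  interpret D: prob_space D by (rule D)
  interpret PP: product_prob_space "\<lambda>_::'i. D" UNIV by (rule product_prob_spaceI) (rule D)
  have "(\<integral>\<^sup>+xs. ennreal (exp (- l * (\<Sum>i\<in>I. g (xs i)))) \<partial>PiM UNIV (\<lambda>_::'i. D))
      = (\<integral>\<^sup>+xs. (\<Prod>i\<in>I. ennreal (exp (- l * g (xs i)))) \<partial>PiM UNIV (\<lambda>_::'i. D))"
    using \<open>finite I\<close> by (simp add: prod_ennreal sum_distrib_left flip: exp_sum)
  also have "\<dots> = (\<Prod>i\<in>I. \<integral>\<^sup>+x. ennreal (exp (- l * g x)) \<partial>D)"
    using \<open>finite I\<close> by (intro PP.nn_integral_PiM_prod_finite) auto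
  also have "\<dots> = ennreal ((\<integral>x. exp (- l * g x) \<partial>D) ^ card I)"
    using g \<open>0 \<le> l\<close>
    by (subst nn_integral_eq_integral) (auto intro!: D.integrable_const_bound[where B=1]
        simp: prod_ennreal ennreal_power)
  also have "\<dots> \<le> ennreal (exp (- (l / (1 + l)) * (\<integral>x. g x \<partial>D)) ^ card I)"
    using D.expectation_exp_neg_mult_le[of g l] g \<open>0 \<le> l\<close>
    by (intro ennreal_leI power_mono integral_nonneg_AE) auto
  finally show ?thesis .
qed

lemma prob_sample_mean_deviation_le:
  fixes g :: "'x \<Rightarrow> real"
  assumes D: "prob_space D" and g_meas[measurable]: "g \<in> borel_measurable D"
    and g: "\<And>x. 0 \<le> g x \<and> g x \<le> 1" and "0 < l" "0 < n"
  defines "PP \<equiv> PiM UNIV (\<lambda>_::nat. D)"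
  shows "measure PP {xs \<in> space PP. (1 + l) * ((\<Sum>i=1..n. g (xs i)) / real n)
      + (1 + l) * L / (l * real n) < (\<integral>x. g x \<partial>D)} \<le> exp (- L)"
proof -
  interpret PP: prob_space PP unfolding PP_def by (intro prob_space_PiM D)
  define p where "p = (\<integral>x. g x \<partial>D)"
  define S where "S xs = (\<Sum>i=1..n. g (xs i))" for xs :: "nat \<Rightarrow> 'x"
  define a where "a = L / l - real n * p / (1 + l)"
  have [measurable]: "S \<in> borel_measurable PP" unfolding S_def PP_def by measurable
  have "emeasure PP {xs \<in> space PP. a \<le> - S xs}
      \<le> ennreal (exp (- l * a)) * (\<integral>\<^sup>+xs. ennreal (exp (l * - S xs)) * indicator (space PP) xs \<partial>PP)"
    using \<open>0 < l\<close> by (intro Chernoff_ineq_nn_integral_ge) auto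
  also have "(\<integral>\<^sup>+xs. ennreal (exp (l * - S xs)) * indicator (space PP) xs \<partial>PP)
      = (\<integral>\<^sup>+xs. ennreal (exp (- l * (\<Sum>i\<in>{1..n}. g (xs i)))) \<partial>PP)"
    by (intro nn_integral_cong) (simp add: S_def)
  also have "\<dots> \<le> ennreal (exp (- (l / (1 + l)) * p) ^ n)"
    unfolding PP_def p_def using nn_integral_PiM_exp_neg_sum_le[OF D g_meas g, of "{1..n}" l] \<open>0 < l\<close>
    by simp
  finally have "ennreal (measure PP {xs \<in> space PP. a \<le> - S xs})
      \<le> ennreal (exp (- l * a) * exp (- (l / (1 + l)) * p) ^ n)"
    by (simp add: PP.emeasure_eq_measure ennreal_mult ennreal_power mult_left_mono)
  then have "measure PP {xs \<in> space PP. a \<le> - S xs}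
      \<le> exp (- l * a) * exp (- (l / (1 + l)) * p) ^ n"
    by (simp add: ennreal_le_iff)
  also have "\<dots> = exp (- l * a + real n * (- (l / (1 + l)) * p))"
    by (simp only: exp_add flip: exp_of_nat_mult)
  also have "\<dots> = exp (- L)"
    using \<open>0 < l\<close> by (simp add: a_def right_diff_distrib)
  finally have "measure PP {xs \<in> space PP. a \<le> - S xs} \<le> exp (- L)" .
  moreover have "a \<le> - S xs" if "(1 + l) * (S xs / real n) + (1 + l) * L / (l * real n) < p" for xs
  proof -
    have "(1 + l) * ((S xs + L / l) / real n) < p"
      using that by (simp add: add_divide_distrib distrib_left)
    then have "S xs + L / l < real n * p / (1 + l)"
      using \<open>0 < l\<close> \<open>0 < n\<close> by (simp add: field_simps)
    then show ?thesis by (simp add: a_def)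
  qed
  then have "measure PP {xs \<in> space PP. (1 + l) * (S xs / real n) + (1 + l) * L / (l * real n) < p}
      \<le> measure PP {xs \<in> space PP. a \<le> - S xs}"
    by (intro PP.finite_measure_mono) auto
  ultimately show ?thesis by (simp add: S_def p_def)
qed

lemma sums_div_consecutive_product: "(\<lambda>n::nat. c / (real (n+1) * real (n+2))) sums c"
proof -
  have "(\<lambda>n. inverse (real (Suc n)) - inverse (real (Suc (Suc n)))) sums (inverse (real (Suc 0)) - 0)"
    by (intro telescope_sums' LIMSEQ_inverse_real_of_nat)
  moreover have "inverse (real (Suc n)) - inverse (real (Suc (Suc n))) = 1 / (real (n+1) * real (n+2))"
    for n by (simp add: field_simps)
  ultimately have "(\<lambda>n. 1 / (real (n+1) * real (n+2))) sums 1" by simp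
  from sums_mult[OF this, of c] show ?thesis by simp
qed

lemma (in prob_space) prob_compl_Union_ge:
  assumes "range B \<subseteq> events" "\<And>n. prob (B n) \<le> b n" "b sums s"
  shows "1 - s \<le> prob (space M - (\<Union>n. B n))"
proof -
  have summable: "summable (\<lambda>n. prob (B n))"
    by (rule summable_comparison_test[OF _ sums_summable[OF assms(3)]]) (use assms(2) in auto)
  have "prob (\<Union>n. B n) \<le> (\<Sum>n. prob (B n))"
    by (rule finite_measure_subadditive_countably) (use assms(1) summable in auto)
  also have "\<dots> \<le> (\<Sum>n. b n)"
    by (rule suminf_le[OF assms(2) summable sums_summable[OF assms(3)]])
  also have "\<dots> = s" using assms(3) by (simp add: sums_iff)
  finally show ?thesis using assms(1) by (subst prob_compl) auto
qed

lemma prob_family_sample_mean_deviation_le: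
  fixes g :: "'i \<Rightarrow> 'x \<Rightarrow> real"
  assumes D: "prob_space D" and F: "finite F"
    and g_meas: "\<And>j. j \<in> F \<Longrightarrow> g j \<in> borel_measurable D"
    and g: "\<And>j x. j \<in> F \<Longrightarrow> 0 \<le> g j x \<and> g j x \<le> 1" and "0 < l" "0 < n" "0 < c"
  defines "PP \<equiv> PiM UNIV (\<lambda>_::nat. D)" and "L \<equiv> ln (real (card F) / c)"
  defines "Bad \<equiv> {xs \<in> space PP. \<exists>j\<in>F. (1 + l) * ((\<Sum>i=1..n. g j (xs i)) / real n)
      + (1 + l) * L / (l * real n) < (\<integral>x. g j x \<partial>D)}"
  shows "Bad \<in> sets PP" and "measure PP Bad \<le> c"
proof -
  interpret PP: prob_space PP unfolding PP_def by (intro prob_space_PiM D)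
  define Bad_j where "Bad_j j = {xs \<in> space PP. (1 + l) * ((\<Sum>i=1..n. g j (xs i)) / real n)
      + (1 + l) * L / (l * real n) < (\<integral>x. g j x \<partial>D)}" for j
  have Bad_eq: "Bad = (\<Union>j\<in>F. Bad_j j)" by (auto simp: Bad_def Bad_j_def)
  have Bad_j_sets: "Bad_j j \<in> PP.events" if "j \<in> F" for j
    using g_meas[OF that] unfolding Bad_j_def PP_def by measurable
  then show "Bad \<in> sets PP" using F by (auto simp: Bad_eq)
  show "measure PP Bad \<le> c"
  proof (cases "F = {}")
    case False
    have "measure PP Bad \<le> (\<Sum>j\<in>F. measure PP (Bad_j j))"
      unfolding Bad_eq using Bad_j_sets by (intro PP.finite_measure_subadditive_finite[OF F]) auto
    also have "\<dots> \<le> (\<Sum>j\<in>F. exp (- L))"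
      using g_meas g \<open>0 < l\<close> \<open>0 < n\<close> unfolding Bad_j_def PP_def
      by (intro sum_mono prob_sample_mean_deviation_le[OF D]) auto
    also have "\<dots> = c"
      using False F \<open>0 < c\<close> by (simp add: L_def exp_minus card_gt_0_iff)
    finally show ?thesis .
  qed (use \<open>0 < c\<close> in \<open>simp add: Bad_def\<close>)
qed

lemma uniform_sample_mean_deviation:
  fixes g :: "nat \<Rightarrow> 'i \<Rightarrow> 'x \<Rightarrow> real"
  assumes D: "prob_space D" and F: "\<And>n. finite (F n)"
    and g_meas: "\<And>n j. j \<in> F n \<Longrightarrow> g n j \<in> borel_measurable D"
    and g: "\<And>n j x. j \<in> F n \<Longrightarrow> 0 \<le> g n j x \<and> g n j x \<le> 1"
    and "0 < l" "0 < \<delta>"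
  obtains E where "E \<in> sets (PiM UNIV (\<lambda>_::nat. D))"
    and "1 - \<delta> \<le> measure (PiM UNIV (\<lambda>_::nat. D)) E"
    and "\<And>xs n j. xs \<in> E \<Longrightarrow> 0 < n \<Longrightarrow> j \<in> F n \<Longrightarrow>
      (\<integral>x. g n j x \<partial>D) \<le> (1 + l) * ((\<Sum>i=1..n. g n j (xs i)) / real n)
        + (1 + l) * ln (real (card (F n)) * (real (n+1) * real (n+2)) / \<delta>) / (l * real n)"
proof -
  define PP where "PP = PiM UNIV (\<lambda>_::nat. D)"
  interpret PP: prob_space PP unfolding PP_def by (intro prob_space_PiM D)
  define B where "B n = (if n = 0 then {} else {xs \<in> space PP. \<exists>j\<in>F n.
      (1 + l) * ((\<Sum>i=1..n. g n j (xs i)) / real n)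
        + (1 + l) * ln (real (card (F n)) / (\<delta> / (real (n+1) * real (n+2)))) / (l * real n)
      < (\<integral>x. g n j x \<partial>D)})" for n
  note bad = prob_family_sample_mean_deviation_le[OF D F g_meas g \<open>0 < l\<close> _ divide_pos_pos[OF \<open>0 < \<delta>\<close>]]
  have B_sets: "range B \<subseteq> PP.events" and "PP.prob (B n) \<le> \<delta> / (real (n+1) * real (n+2))" for n
    using bad \<open>0 < \<delta>\<close> by (auto simp: B_def PP_def)
  then have "1 - \<delta> \<le> PP.prob (space PP - (\<Union>n. B n))"
    by (intro PP.prob_compl_Union_ge[OF B_sets _ sums_div_consecutive_product])
  moreover have "space PP - (\<Union>n. B n) \<in> PP.events" using B_sets by auto
  moreover have "(\<integral>x. g n j x \<partial>D) \<le> (1 + l) * ((\<Sum>i=1..n. g n j (xs i)) / real n)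
      + (1 + l) * ln (real (card (F n)) * (real (n+1) * real (n+2)) / \<delta>) / (l * real n)"
    if "xs \<in> space PP - (\<Union>n. B n)" "0 < n" "j \<in> F n" for xs n j
  proof -
    have "xs \<notin> B n" "xs \<in> space PP" using that by auto
    then show ?thesis using that by (auto simp: B_def not_less)
  qed
  ultimately show ?thesis using that unfolding PP_def by blast
qed

section \<open>Integrating the sparsification sandwich\<close>

lemma borel_measurable_sum_list:
  fixes f :: "'b \<Rightarrow> 'a \<Rightarrow> 'c::{second_countable_topology, topological_monoid_add}"
  shows "(\<And>y. y \<in> set ys \<Longrightarrow> f y \<in> borel_measurable M) \<Longrightarrow> (\<lambda>x. \<Sum>y\<leftarrow>ys. f y x) \<in> borel_measurable M"
  by (induction ys) simp_all

lemma (in prob_space) integrable_inverse_affine: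
  fixes w :: "'a \<Rightarrow> real"
  assumes [measurable]: "w \<in> borel_measurable M"
    and "\<And>x. 0 \<le> w x" "0 \<le> a" "0 < \<mu>"
  shows "integrable M (\<lambda>x. 1 / (a * w x + \<mu>))"
proof (rule integrable_const_bound[where B="1/\<mu>"])
  have "\<mu> \<le> a * w x + \<mu>" for x using assms by simp
  then show "AE x in M. norm (1 / (a * w x + \<mu>)) \<le> 1 / \<mu>"
    using \<open>0 < \<mu>\<close> by (simp add: frac_le)
qed measurable

lemma integral_inverse_affine_le_if_sparse_deviation:
  fixes h :: "'b \<Rightarrow> 'x \<Rightarrow> real"
  assumes D: "prob_space D" and S: "finite S"
    and p: "(\<Sum>j\<in>S. p j) = 1" "\<And>j. j \<in> S \<Longrightarrow> 0 \<le> p j"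
    and h_meas: "\<And>j. j \<in> S \<Longrightarrow> h j \<in> borel_measurable D"
    and h: "\<And>j x. j \<in> S \<Longrightarrow> 0 \<le> h j x \<and> h j x \<le> 1"
    and "0 < m" "0 < a" "a \<le> 1" "0 < \<mu>" "0 < n" "0 \<le> l"
    and dev: "\<And>ys. set ys \<subseteq> S \<Longrightarrow> length ys = m \<Longrightarrow>
      (\<integral>x. 1 / (a * ((\<Sum>y\<leftarrow>ys. h y x) / real m) + \<mu>) \<partial>D)
        \<le> (1 + l) * ((\<Sum>i=1..n. 1 / (a * ((\<Sum>y\<leftarrow>ys. h y (xs i)) / real m) + \<mu>)) / real n) + e"
  shows "(\<integral>x. 1 / (a * (\<Sum>j\<in>S. p j * h j x) + \<mu>) \<partial>D)
    \<le> (1 + l) * (1 + 1 / (real m * \<mu>))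
        * ((\<Sum>i=1..n. 1 / (a * (\<Sum>j\<in>S. p j * h j (xs i)) + \<mu>)) / real n) + e"
proof -
  interpret D: prob_space D by (rule D)
  define f where "f x = 1 / (a * (\<Sum>j\<in>S. p j * h j x) + \<mu>)" for x
  \<comment> \<open>Cut off outside lists over \<open>S\<close>, so that it is integrable for every \<open>ys\<close>.\<close>
  define G where "G ys = (\<lambda>x. if set ys \<subseteq> S then 1 / (a * ((\<Sum>y\<leftarrow>ys. h y x) / real m) + \<mu>) else 0)"
    for ys
  have G_integrable: "integrable D (G ys)" for ys
  proof (cases "set ys \<subseteq> S")
    case True
    then have "(\<lambda>x. (\<Sum>y\<leftarrow>ys. h y x) / real m) \<in> borel_measurable D"
      using h_meas by (intro borel_measurable_divide borel_measurable_sum_list) auto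
    moreover have "0 \<le> (\<Sum>y\<leftarrow>ys. h y x) / real m" for x
      using True h by (force intro!: sum_list_nonneg divide_nonneg_nonneg)
    ultimately have "integrable D (\<lambda>x. 1 / (a * ((\<Sum>y\<leftarrow>ys. h y x) / real m) + \<mu>))"
      using \<open>0 < a\<close> \<open>0 < \<mu>\<close> by (intro D.integrable_inverse_affine) auto
    then show ?thesis using True by (simp add: G_def)
  qed (simp add: G_def)
  have "(\<lambda>x. \<Sum>j\<in>S. p j * h j x) \<in> borel_measurable D"
    using h_meas by (intro borel_measurable_sum borel_measurable_times) auto
  moreover have "0 \<le> (\<Sum>j\<in>S. p j * h j x)" for x using p h by (intro sum_nonneg) auto
  ultimately have f_integrable: "integrable D f"
    unfolding f_def using \<open>0 < a\<close> \<open>0 < \<mu>\<close> by (intro D.integrable_inverse_affine) auto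
  have G_expect: "list_expect p S m (\<lambda>ys. G ys x)
      = list_expect p S m (\<lambda>ys. 1 / (a * ((\<Sum>y\<leftarrow>ys. h y x) / real m) + \<mu>))" for x
    by (rule list_expect_cong) (simp add: G_def)
  have "(\<integral>x. f x \<partial>D) \<le> (\<integral>x. list_expect p S m (\<lambda>ys. G ys x) \<partial>D)"
    using inverse_affine_le_list_expect[OF p _ \<open>0 < m\<close> \<open>0 < a\<close> \<open>0 < \<mu>\<close>] h
    by (intro integral_mono f_integrable integrable_list_expect G_integrable)
      (simp add: f_def G_expect)
  also have "\<dots> = list_expect p S m (\<lambda>ys. \<integral>x. G ys x \<partial>D)"
    by (rule integral_list_expect[OF G_integrable])
  also have "\<dots> \<le> list_expect p S m (\<lambda>ys. ((1 + l) / real n) * (\<Sum>i=1..n. G ys (xs i)) + e)"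
  proof (rule list_expect_mono[OF p(2)])
    fix ys assume ys: "set ys \<subseteq> S" "length ys = m"
    from dev[OF ys] show "(\<integral>x. G ys x \<partial>D) \<le> ((1 + l) / real n) * (\<Sum>i=1..n. G ys (xs i)) + e"
      using ys(1) by (simp add: G_def)
  qed
  also have "\<dots> = ((1 + l) / real n) * (\<Sum>i=1..n. list_expect p S m (\<lambda>ys. G ys (xs i))) + e"
    by (simp only: list_expect_add list_expect_scale list_expect_sum[OF finite_atLeastAtMost]
        list_expect_const[OF p(1)])
  also have "\<dots> \<le> ((1 + l) / real n) * (\<Sum>i=1..n. (1 + 1 / (real m * \<mu>)) * f (xs i)) + e"
    using list_expect_inverse_affine_le[OF p _ assms(7-10)] h assms
    by (intro add_right_mono mult_left_mono sum_mono) (simp_all add: G_expect f_def)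
  also have "\<dots> = (1 + l) * (1 + 1 / (real m * \<mu>)) * ((\<Sum>i=1..n. f (xs i)) / real n) + e"
    by (simp add: sum_distrib_left sum_divide_distrib mult.assoc)
  finally show ?thesis by (simp add: f_def)
qed

section \<open>Policies and parameters\<close>

definition agree :: "('x \<Rightarrow> 'a) \<Rightarrow> ('x \<Rightarrow> 'a) \<Rightarrow> 'x \<Rightarrow> real" where
  "agree \<pi>' \<pi> x = (if \<pi>' x = \<pi> x then 1 else 0)"

lemma agree_bounds: "0 \<le> agree \<pi>' \<pi> x \<and> agree \<pi>' \<pi> x \<le> 1"
  by (simp add: agree_def)

lemma W_eq_sum_agree: "finite Pol \<Longrightarrow> W Pol P x (\<pi> x) = (\<Sum>\<pi>'\<in>Pol. P \<pi>' * agree \<pi>' \<pi> x)"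
  unfolding W_def agree_def by (simp add: sum.inter_filter if_distrib cong: if_cong)

lemma agree_measurable:
  assumes "finite A" "\<And>x. \<pi> x \<in> A"
    and "\<pi> \<in> measurable D (count_space UNIV)" "\<pi>' \<in> measurable D (count_space UNIV)"
  shows "agree \<pi>' \<pi> \<in> borel_measurable D"
proof -
  have "{x \<in> space D. \<pi>' x = \<pi> x} = (\<Union>a\<in>A. (\<pi>' -` {a} \<inter> space D) \<inter> (\<pi> -` {a} \<inter> space D))"
    using assms(2) by auto
  also have "\<dots> \<in> sets D"
    using assms by (intro sets.finite_UN sets.Int measurable_sets[where A="count_space UNIV"]) auto
  finally have "indicator {x \<in> space D. \<pi>' x = \<pi> x} \<in> borel_measurable D"
    by (rule borel_measurable_indicator)
  then show ?thesis
    by (rule measurable_cong[THEN iffD1, rotated]) (simp add: agree_def indicator_def)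
qed

definition sparsity :: "nat \<Rightarrow> nat \<Rightarrow> real \<Rightarrow> real \<Rightarrow> nat \<Rightarrow> nat" where
  "sparsity K N \<delta> \<epsilon> t = nat \<lceil>3 / (\<epsilon> * mu_t K N \<delta> t)\<rceil>"

text \<open>The integrand of \<open>V\<close> for the empirical distribution of \<open>ys\<close>, scaled by \<open>\<mu>\<close> into \<open>[0, 1]\<close>.\<close>

definition sparse_weight :: "nat \<Rightarrow> nat \<Rightarrow> real \<Rightarrow> real \<Rightarrow> nat \<Rightarrow> ('x \<Rightarrow> 'a) list \<Rightarrow> ('x \<Rightarrow> 'a) \<Rightarrow> 'x \<Rightarrow> real"
  where "sparse_weight K N \<delta> \<epsilon> t ys \<pi> x = (let \<mu> = mu_t K N \<delta> t in
    \<mu> / ((1 - real K * \<mu>) * ((\<Sum>y\<leftarrow>ys. agree y \<pi> x) / real (sparsity K N \<delta> \<epsilon> t)) + \<mu>))"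

text \<open>The additive term is what the union bound over the \<open>N ^ (m + 1)\<close> pairs \<open>(\<pi>, ys)\<close> and
  over the sample size costs.\<close>

definition good_sample :: "'x measure \<Rightarrow> ('x \<Rightarrow> 'a) set \<Rightarrow> nat \<Rightarrow> real \<Rightarrow> real \<Rightarrow> nat \<Rightarrow> (nat \<Rightarrow> 'x) \<Rightarrow> bool"
  where "good_sample D Pol K \<delta> \<epsilon> t xs \<longleftrightarrow> (\<forall>\<pi>\<in>Pol. \<forall>ys. set ys \<subseteq> Pol \<longrightarrow>
    length ys = sparsity K (card Pol) \<delta> \<epsilon> t \<longrightarrow>
      (\<integral>x. sparse_weight K (card Pol) \<delta> \<epsilon> t ys \<pi> x \<partial>D)
      \<le> (1 + \<epsilon>/3) * ((\<Sum>i=1..t-1. sparse_weight K (card Pol) \<delta> \<epsilon> t ys \<pi> (xs i)) / real (t - 1))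
        + (1 + \<epsilon>/3) * ln (real (card Pol) ^ Suc (sparsity K (card Pol) \<delta> \<epsilon> t)
            * (real t * real (t + 1)) / \<delta>) / (\<epsilon>/3 * real (t - 1)))"

context
  fixes K N t :: nat and \<delta> \<epsilon> :: real
  assumes K: "1 \<le> K" and N: "1 \<le> N" and \<delta>: "0 < \<delta>" "\<delta> < 1" and \<epsilon>: "0 < \<epsilon>" "\<epsilon> < 1"
    and t_large: "16 * real K * ln (8 * real K * real N / \<delta>) \<le> real t"
begin

lemma ln_div_confidence_bounds:
  shows "ln (real N) \<le> ln (real N / \<delta>)" "0 \<le> ln (real N)"
    and "real K * ln (real N / \<delta>) \<le> real t / 16"
proof -
  have "real N \<le> real N / \<delta>" using N \<delta> by (simp add: le_divide_eq)
  then show "ln (real N) \<le> ln (real N / \<delta>)" using N by (intro ln_mono) auto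
  show "0 \<le> ln (real N)" using N by simp
  have "real N / \<delta> \<le> 8 * real K * real N / \<delta>" using K N \<delta> by (intro divide_right_mono) auto
  then have "ln (real N / \<delta>) \<le> ln (8 * real K * real N / \<delta>)" using N \<delta> by (intro ln_mono) auto
  then have "real K * ln (real N / \<delta>) \<le> real K * ln (8 * real K * real N / \<delta>)"
    by (rule mult_left_mono) simp
  then show "real K * ln (real N / \<delta>) \<le> real t / 16" using t_large by linarith
qed

lemma sixteen_le_sample_size: "16 \<le> real t"
proof -
  have "exp 1 \<le> (8::real)" using exp_le by linarith
  then have "1 \<le> ln (8::real)" by (simp add: ln_ge_iff)
  also have "\<dots> \<le> ln (8 * real K * real N / \<delta>)"
  proof (rule ln_mono)
    have "\<delta> \<le> 1 * 1" using \<delta> by simp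
    also have "\<dots> \<le> real K * real N" using K N by (intro mult_mono) auto
    finally show "8 \<le> 8 * real K * real N / \<delta>" using \<delta> by (simp add: le_divide_eq)
  qed simp_all
  also have "\<dots> \<le> real K * ln (8 * real K * real N / \<delta>)"
    using K calculation by (simp add: mult_le_cancel_right1)
  finally show ?thesis using t_large by linarith
qed

lemma C_t_bounds:
  shows "2 \<le> C_t N \<delta> t" "2 * ln (real N) \<le> C_t N \<delta> t" "C_t N \<delta> t \<le> 3 * real t"
proof -
  note ln_N = ln_div_confidence_bounds
  have t: "16 \<le> real t" by (rule sixteen_le_sample_size)
  have C_eq: "C_t N \<delta> t = 2 * ln (real N / \<delta>) + 2 * ln (real t)"
    unfolding C_t_def using N \<delta> t by (simp add: ln_mult ln_div)
  have "exp 1 \<le> real t" using exp_le t by linarith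
  then have "1 \<le> ln (real t)" using t by (simp add: ln_ge_iff)
  moreover have "ln (real t) \<le> real t" using ln_le_minus_one[of "real t"] t by simp
  moreover have "ln (real N / \<delta>) \<le> real t / 16"
    using ln_N(3) mult_right_mono[of 1 "real K" "ln (real N / \<delta>)"] ln_N(1,2) K by simp
  ultimately show "2 \<le> C_t N \<delta> t" "2 * ln (real N) \<le> C_t N \<delta> t" "C_t N \<delta> t \<le> 3 * real t"
    using ln_N(1,2) C_eq by linarith+
qed

lemma mu_t_cases:
  "mu_t K N \<delta> t = 1 / (2 * real K) \<or> (mu_t K N \<delta> t)\<^sup>2 = C_t N \<delta> t / (2 * real K * real t)"
  using C_t_bounds(1) K sixteen_le_sample_size by (auto simp: mu_t_def min_def)

lemma mu_t_pos: "0 < mu_t K N \<delta> t"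
  using C_t_bounds(1) K sixteen_le_sample_size by (simp add: mu_t_def)

lemma K_mult_mu_t_le: "real K * mu_t K N \<delta> t \<le> 1 / 2"
proof -
  have "mu_t K N \<delta> t \<le> 1 / (2 * real K)" by (simp add: mu_t_def)
  then show ?thesis using K by (simp add: field_simps)
qed

lemma ln_div_mu_t_square_le: "ln (real N) / (mu_t K N \<delta> t)\<^sup>2 \<le> real K * real t"
  using mu_t_cases
proof
  assume \<mu>: "mu_t K N \<delta> t = 1 / (2 * real K)"
  have "real K * ln (real N) \<le> real K * ln (real N / \<delta>)"
    using ln_div_confidence_bounds(1) by (rule mult_left_mono) simp
  then have "4 * real K * (real K * ln (real N)) \<le> 4 * real K * (real t / 16)"
    using ln_div_confidence_bounds(3) by (intro mult_left_mono) auto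
  then show ?thesis using K sixteen_le_sample_size by (simp add: \<mu> power2_eq_square field_simps)
next
  assume \<mu>: "(mu_t K N \<delta> t)\<^sup>2 = C_t N \<delta> t / (2 * real K * real t)"
  have "ln (real N) / (mu_t K N \<delta> t)\<^sup>2 = real K * real t * (2 * ln (real N) / C_t N \<delta> t)"
    using C_t_bounds(1) K sixteen_le_sample_size by (simp add: \<mu> field_simps)
  also have "\<dots> \<le> real K * real t * 1"
    using C_t_bounds(1,2) by (intro mult_left_mono) auto
  finally show ?thesis by simp
qed

lemma C_t_div_mu_t_le: "C_t N \<delta> t / (real t * mu_t K N \<delta> t) \<le> 6 * real K"
  using mu_t_cases
proof
  assume \<mu>: "mu_t K N \<delta> t = 1 / (2 * real K)"
  have "C_t N \<delta> t / (real t * mu_t K N \<delta> t) = 2 * real K * (C_t N \<delta> t / real t)"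
    using K sixteen_le_sample_size by (simp add: \<mu> field_simps)
  also have "\<dots> \<le> 2 * real K * 3"
    using C_t_bounds(3) sixteen_le_sample_size by (intro mult_left_mono) (auto simp: field_simps)
  finally show ?thesis by simp
next
  assume \<mu>: "(mu_t K N \<delta> t)\<^sup>2 = C_t N \<delta> t / (2 * real K * real t)"
  have "C_t N \<delta> t = 2 * real K * real t * (mu_t K N \<delta> t)\<^sup>2"
    using K sixteen_le_sample_size by (simp add: \<mu>)
  then have "C_t N \<delta> t / (real t * mu_t K N \<delta> t) = 2 * real K * mu_t K N \<delta> t"
    using mu_t_pos sixteen_le_sample_size by (simp add: power2_eq_square)
  then show ?thesis using K_mult_mu_t_le K by linarith
qed

lemma sparsity_bounds:
  shows "3 / (\<epsilon> * mu_t K N \<delta> t) \<le> real (sparsity K N \<delta> \<epsilon> t)"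
    and "real (sparsity K N \<delta> \<epsilon> t) \<le> 3 / (\<epsilon> * mu_t K N \<delta> t) + 1"
proof -
  have "0 \<le> 3 / (\<epsilon> * mu_t K N \<delta> t)" using mu_t_pos \<epsilon> by simp
  then show "3 / (\<epsilon> * mu_t K N \<delta> t) \<le> real (sparsity K N \<delta> \<epsilon> t)"
    and "real (sparsity K N \<delta> \<epsilon> t) \<le> 3 / (\<epsilon> * mu_t K N \<delta> t) + 1"
    unfolding sparsity_def by (simp_all add: real_nat_ceiling_ge)
qed

lemma sparsity_pos: "0 < sparsity K N \<delta> \<epsilon> t"
proof -
  have "0 < 3 / (\<epsilon> * mu_t K N \<delta> t)" using mu_t_pos \<epsilon> by simp
  then show ?thesis using sparsity_bounds(1) by linarith
qed

lemma inverse_sparsity_mu_t_le: "1 / (real (sparsity K N \<delta> \<epsilon> t) * mu_t K N \<delta> t) \<le> \<epsilon> / 3"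
proof -
  have "3 / \<epsilon> \<le> real (sparsity K N \<delta> \<epsilon> t) * mu_t K N \<delta> t"
    using sparsity_bounds(1) mu_t_pos \<epsilon> by (simp add: field_simps)
  then have "1 / (real (sparsity K N \<delta> \<epsilon> t) * mu_t K N \<delta> t) \<le> 1 / (3 / \<epsilon>)"
    using \<epsilon> sparsity_pos mu_t_pos by (intro divide_left_mono) auto
  then show ?thesis by simp
qed

lemma accuracy_factor_le:
  "(1 + \<epsilon>/3) * (1 + 1 / (real (sparsity K N \<delta> \<epsilon> t) * mu_t K N \<delta> t)) \<le> 1 + \<epsilon>"
proof -
  have "(1 + \<epsilon>/3) * (1 + 1 / (real (sparsity K N \<delta> \<epsilon> t) * mu_t K N \<delta> t))
      \<le> (1 + \<epsilon>/3) * (1 + \<epsilon>/3)"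
    using inverse_sparsity_mu_t_le \<epsilon> by (intro mult_left_mono) auto
  also have "\<dots> = 1 + \<epsilon> - \<epsilon> * (1 - \<epsilon>) / 9 - 2 * \<epsilon> / 9" by (simp add: field_simps)
  also have "\<dots> \<le> 1 + \<epsilon>" using \<epsilon> mult_nonneg_nonneg[of \<epsilon> "1 - \<epsilon>"] by linarith
  finally show ?thesis .
qed

lemma ln_sparse_family_size_le:
  "ln (real N ^ Suc (sparsity K N \<delta> \<epsilon> t) * (real t * real (t + 1)) / \<delta>)
    \<le> 3 / (\<epsilon> * mu_t K N \<delta> t) * ln (real N) + 2 * C_t N \<delta> t"
proof -
  define m where "m = sparsity K N \<delta> \<epsilon> t"
  have t: "16 \<le> real t" by (rule sixteen_le_sample_size)
  have L_eq: "ln (real N ^ Suc m * (real t * real (t + 1)) / \<delta>)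
      = real (Suc m) * ln (real N) + ln (real t * real (t + 1)) - ln \<delta>"
    using N \<delta> t by (simp add: ln_div ln_mult ln_realpow distrib_right)
  have C_eq: "C_t N \<delta> t = 2 * ln (real N) + 2 * ln (real t) - 2 * ln \<delta>"
    unfolding C_t_def using N \<delta> t by (simp add: ln_mult ln_div)
  have "real t * real (t + 1) \<le> 2 * (real t)\<^sup>2"
    using t mult_right_mono[of 1 "real t" "real t"] by (simp add: power2_eq_square algebra_simps)
  also have "\<dots> \<le> exp 1 * (real t)\<^sup>2"
    using exp_ge_add_one_self[of 1] by (intro mult_right_mono) auto
  finally have "real t * real (t + 1) \<le> exp 1 * (real t)\<^sup>2" .
  then have "ln (real t * real (t + 1)) \<le> ln (exp 1 * (real t)\<^sup>2)"
    using t by (intro ln_mono) auto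
  also have "\<dots> = 1 + 2 * ln (real t)" using t by (simp add: ln_mult ln_realpow)
  finally have ln_t: "ln (real t * real (t + 1)) \<le> 1 + 2 * ln (real t)" .
  have "real (Suc m) * ln (real N) \<le> (3 / (\<epsilon> * mu_t K N \<delta> t) + 2) * ln (real N)"
    using sparsity_bounds(2) ln_div_confidence_bounds(2) by (intro mult_right_mono) (auto simp: m_def)
  moreover have "ln \<delta> < 0" using \<delta> by simp
  ultimately show ?thesis
    using L_eq C_eq ln_t C_t_bounds(1) by (simp add: m_def algebra_simps)
qed

lemma deviation_term_le:
  "(1 + \<epsilon>/3) * ln (real N ^ Suc (sparsity K N \<delta> \<epsilon> t) * (real t * real (t + 1)) / \<delta>)
    / (\<epsilon>/3 * real (t - 1)) / mu_t K N \<delta> t \<le> 7500 / \<epsilon>^3 * real K"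
proof -
  define \<mu> where "\<mu> = mu_t K N \<delta> t"
  define C where "C = C_t N \<delta> t"
  define L where "L = ln (real N ^ Suc (sparsity K N \<delta> \<epsilon> t) * (real t * real (t + 1)) / \<delta>)"
  have t: "16 \<le> real t" by (rule sixteen_le_sample_size)
  have \<mu>: "0 < \<mu>" unfolding \<mu>_def by (rule mu_t_pos)
  have "real t / 2 \<le> real (t - 1)" using t by (simp add: of_nat_diff)
  have "1 \<le> real t * real (t + 1)" using t mult_mono[of 1 "real t" 1 "real (t + 1)"] by simp
  then have "1 * 1 \<le> real N ^ Suc (sparsity K N \<delta> \<epsilon> t) * (real t * real (t + 1))"
    using N by (intro mult_mono one_le_power) auto
  then have "1 \<le> real N ^ Suc (sparsity K N \<delta> \<epsilon> t) * (real t * real (t + 1)) / \<delta>"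
    using \<delta> by (simp add: le_divide_eq)
  then have L: "0 \<le> L" "L \<le> 3 / (\<epsilon> * \<mu>) * ln (real N) + 2 * C"
    using ln_sparse_family_size_le by (simp_all add: L_def \<mu>_def C_def)
  have "(1 + \<epsilon>/3) * L / (\<epsilon>/3 * real (t - 1)) / \<mu> = (3 + \<epsilon>) * L / (\<epsilon> * real (t - 1) * \<mu>)"
    using \<epsilon> \<mu> t by (simp add: field_simps)
  also have "\<dots> \<le> 4 * L / (\<epsilon> * (real t / 2) * \<mu>)"
    using \<epsilon> \<mu> L t \<open>real t / 2 \<le> real (t - 1)\<close>
    by (intro frac_le mult_right_mono mult_pos_pos mult_left_mono) auto
  also have "\<dots> = 8 * L / (\<epsilon> * real t * \<mu>)" by simp
  also have "\<dots> \<le> 8 * (3 / (\<epsilon> * \<mu>) * ln (real N) + 2 * C) / (\<epsilon> * real t * \<mu>)"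
    using L \<epsilon> \<mu> t by (intro divide_right_mono mult_left_mono) auto
  also have "\<dots> = 24 / \<epsilon>\<^sup>2 * (ln (real N) / \<mu>\<^sup>2) / real t + 16 / \<epsilon> * (C / (real t * \<mu>))"
    using \<epsilon> \<mu> t by (simp add: field_simps power2_eq_square)
  also have "\<dots> \<le> 24 / \<epsilon>\<^sup>2 * (real K * real t) / real t + 16 / \<epsilon> * (6 * real K)"
    using ln_div_mu_t_square_le C_t_div_mu_t_le \<epsilon> t
    by (intro add_mono divide_right_mono mult_left_mono) (auto simp: \<mu>_def C_def)
  also have "\<dots> = 24 * real K / \<epsilon>\<^sup>2 + 96 * real K / \<epsilon>" using t by simp
  also have "\<dots> \<le> 24 * real K / \<epsilon>^3 + 96 * real K / \<epsilon>^3"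
    using \<epsilon> by (intro add_mono divide_left_mono)
      (auto simp: power3_eq_cube power2_eq_square mult_le_one mult_left_le_one_le)
  also have "\<dots> \<le> 7500 / \<epsilon>^3 * real K" using \<epsilon> by (simp add: field_simps)
  finally show ?thesis by (simp add: L_def \<mu>_def)
qed

lemma sparse_weight_measurable_bounded:
  assumes "\<And>y. y \<in> set ys \<Longrightarrow> agree y \<pi> \<in> borel_measurable D"
  shows "sparse_weight K N \<delta> \<epsilon> t ys \<pi> \<in> borel_measurable D"
    and "0 \<le> sparse_weight K N \<delta> \<epsilon> t ys \<pi> x" "sparse_weight K N \<delta> \<epsilon> t ys \<pi> x \<le> 1"
proof -
  have [measurable]: "(\<lambda>x. \<Sum>y\<leftarrow>ys. agree y \<pi> x) \<in> borel_measurable D"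
    using assms by (rule borel_measurable_sum_list)
  show "sparse_weight K N \<delta> \<epsilon> t ys \<pi> \<in> borel_measurable D"
    unfolding sparse_weight_def[abs_def] Let_def by measurable
  have "0 \<le> 1 - real K * mu_t K N \<delta> t" using K_mult_mu_t_le by simp
  moreover have "0 \<le> (\<Sum>y\<leftarrow>ys. agree y \<pi> x) / real (sparsity K N \<delta> \<epsilon> t)"
    by (intro divide_nonneg_nonneg sum_list_nonneg) (auto simp: agree_def)
  ultimately have "0 \<le> (1 - real K * mu_t K N \<delta> t) * ((\<Sum>y\<leftarrow>ys. agree y \<pi> x) / real (sparsity K N \<delta> \<epsilon> t))"
    by (rule mult_nonneg_nonneg)
  then show "0 \<le> sparse_weight K N \<delta> \<epsilon> t ys \<pi> x" "sparse_weight K N \<delta> \<epsilon> t ys \<pi> x \<le> 1"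
    using mu_t_pos by (simp_all add: sparse_weight_def Let_def)
qed

lemma V_le_V_hat_if_good_sample:
  assumes D: "prob_space D" and Pol: "finite Pol" "card Pol = N"
    and agree_meas: "\<And>\<pi>'. \<pi>' \<in> Pol \<Longrightarrow> agree \<pi>' \<pi> \<in> borel_measurable D"
    and P: "is_dist Pol P" and "\<pi> \<in> Pol" and good: "good_sample D Pol K \<delta> \<epsilon> t xs"
  shows "V D Pol K \<delta> P \<pi> t \<le> (1 + \<epsilon>) * V_hat xs Pol K \<delta> P \<pi> t + 7500 / \<epsilon>^3 * real K"
proof -
  define \<mu> where "\<mu> = mu_t K N \<delta> t"
  define m where "m = sparsity K N \<delta> \<epsilon> t"
  define a where "a = 1 - real K * \<mu>"
  define \<eta> where "\<eta> = (1 + \<epsilon>/3) * ln (real N ^ Suc m * (real t * real (t + 1)) / \<delta>) / (\<epsilon>/3 * real (t - 1))"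
  define f where "f x = 1 / (a * (\<Sum>j\<in>Pol. P j * agree j \<pi> x) + \<mu>)" for x
  have \<mu>: "0 < \<mu>" unfolding \<mu>_def by (rule mu_t_pos)
  have a: "0 < a" "a \<le> 1" using K_mult_mu_t_le \<mu> by (auto simp: a_def \<mu>_def)
  have t: "16 \<le> real t" by (rule sixteen_le_sample_size)
  have p: "(\<Sum>j\<in>Pol. P j) = 1" "\<And>j. j \<in> Pol \<Longrightarrow> 0 \<le> P j" using P by (auto simp: is_dist_def)
  have "(\<integral>x. f x \<partial>D)
      \<le> (1 + \<epsilon>/3) * (1 + 1 / (real m * \<mu>)) * ((\<Sum>i=1..t-1. f (xs i)) / real (t - 1)) + \<eta> / \<mu>"
    unfolding f_def
  proof (rule integral_inverse_affine_le_if_sparse_deviation[OF D Pol(1) p agree_meas agree_bounds])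
    show "0 < m" unfolding m_def by (rule sparsity_pos)
    fix ys assume ys: "set ys \<subseteq> Pol" "length ys = m"
    define X where "X x = 1 / (a * ((\<Sum>y\<leftarrow>ys. agree y \<pi> x) / real m) + \<mu>)" for x
    have "(\<integral>x. \<mu> * X x \<partial>D) \<le> (1 + \<epsilon>/3) * ((\<Sum>i=1..t-1. \<mu> * X (xs i)) / real (t - 1)) + \<eta>"
      using good \<open>\<pi> \<in> Pol\<close> ys Pol(2)
      by (simp add: good_sample_def sparse_weight_def Let_def X_def a_def \<eta>_def \<mu>_def m_def)
    then have "\<mu> * (\<integral>x. X x \<partial>D) \<le> \<mu> * ((1 + \<epsilon>/3) * ((\<Sum>i=1..t-1. X (xs i)) / real (t - 1))) + \<eta>"
      by (simp only: integral_mult_right_zero flip: sum_distrib_left) (simp add: mult_ac)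
    then show "(\<integral>x. X x \<partial>D) \<le> (1 + \<epsilon>/3) * ((\<Sum>i=1..t-1. X (xs i)) / real (t - 1)) + \<eta> / \<mu>"
      using \<mu> by (simp add: field_simps)
  qed (use a \<mu> t \<epsilon> in auto)
  also have "\<dots> \<le> (1 + \<epsilon>) * ((\<Sum>i=1..t-1. f (xs i)) / real (t - 1)) + 7500 / \<epsilon>^3 * real K"
  proof (intro add_mono mult_right_mono)
    show "(1 + \<epsilon>/3) * (1 + 1 / (real m * \<mu>)) \<le> 1 + \<epsilon>"
      using accuracy_factor_le by (simp add: m_def \<mu>_def)
    show "\<eta> / \<mu> \<le> 7500 / \<epsilon>^3 * real K"
      using deviation_term_le by (simp add: \<eta>_def m_def \<mu>_def)
    have "0 \<le> (\<Sum>j\<in>Pol. P j * agree j \<pi> x)" for x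
      using p by (intro sum_nonneg mult_nonneg_nonneg) (auto simp: agree_def)
    then have "0 \<le> f x" for x using a \<mu> by (simp add: f_def)
    then show "0 \<le> (\<Sum>i=1..t-1. f (xs i)) / real (t - 1)" by (simp add: sum_nonneg)
  qed
  finally show ?thesis
    using Pol t by (simp add: V_def V_hat_def Let_def W_eq_sum_agree f_def a_def \<mu>_def of_nat_diff)
qed

end

lemma good_sample_event:
  fixes D :: "'x measure" and Pol :: "('x \<Rightarrow> 'a) set"
  assumes D: "prob_space D" and Pol: "finite Pol"
    and agree_meas: "\<And>\<pi>' \<pi>. \<pi>' \<in> Pol \<Longrightarrow> \<pi> \<in> Pol \<Longrightarrow> agree \<pi>' \<pi> \<in> borel_measurable D"
    and K: "1 \<le> K" and N: "1 \<le> card Pol" and \<delta>: "0 < \<delta>" "\<delta> < 1" and \<epsilon>: "0 < \<epsilon>" "\<epsilon> < 1"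
  shows "\<exists>E \<in> sets (PiM UNIV (\<lambda>_::nat. D)). 1 - \<delta> \<le> measure (PiM UNIV (\<lambda>_::nat. D)) E \<and>
    (\<forall>xs\<in>E. \<forall>t. 16 * real K * ln (8 * real K * real (card Pol) / \<delta>) \<le> real t \<longrightarrow>
      good_sample D Pol K \<delta> \<epsilon> t xs)"
proof -
  let ?N = "card Pol"
  define large where "large t \<longleftrightarrow> 16 * real K * ln (8 * real K * real ?N / \<delta>) \<le> real t" for t
  define m where "m t = sparsity K ?N \<delta> \<epsilon> t" for t
  define F where "F n = (if large (Suc n) then Pol \<times> {ys. set ys \<subseteq> Pol \<and> length ys = m (Suc n)} else {})"
    for n
  define g :: "nat \<Rightarrow> ('x \<Rightarrow> 'a) \<times> ('x \<Rightarrow> 'a) list \<Rightarrow> 'x \<Rightarrow> real"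
    where "g n = (\<lambda>(\<pi>, ys). sparse_weight K ?N \<delta> \<epsilon> (Suc n) ys \<pi>)" for n
  have F_finite: "finite (F n)" for n
    using Pol by (simp add: F_def finite_lists_length_eq)
  have g: "g n j \<in> borel_measurable D \<and> (\<forall>x. 0 \<le> g n j x \<and> g n j x \<le> 1)" if "j \<in> F n" for n j
  proof -
    obtain \<pi> ys where j: "j = (\<pi>, ys)" "\<pi> \<in> Pol" "set ys \<subseteq> Pol" and "large (Suc n)"
      using \<open>j \<in> F n\<close> by (cases j) (auto simp: F_def split: if_splits)
    have "agree y \<pi> \<in> borel_measurable D" if "y \<in> set ys" for y
      using agree_meas j that by auto
    from sparse_weight_measurable_bounded[OF K N \<delta> \<epsilon> \<open>large (Suc n)\<close>[unfolded large_def] this]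
    show ?thesis by (simp add: g_def j)
  qed
  obtain E where E: "E \<in> sets (PiM UNIV (\<lambda>_::nat. D))" "1 - \<delta> \<le> measure (PiM UNIV (\<lambda>_::nat. D)) E"
    and dev: "\<And>xs n j. xs \<in> E \<Longrightarrow> 0 < n \<Longrightarrow> j \<in> F n \<Longrightarrow>
      (\<integral>x. g n j x \<partial>D) \<le> (1 + \<epsilon>/3) * ((\<Sum>i=1..n. g n j (xs i)) / real n)
        + (1 + \<epsilon>/3) * ln (real (card (F n)) * (real (n+1) * real (n+2)) / \<delta>) / (\<epsilon>/3 * real n)"
    by (rule uniform_sample_mean_deviation[where F=F and g=g and l="\<epsilon>/3" and \<delta>=\<delta>])
      (use D \<delta> \<epsilon> F_finite g in auto)
  have "good_sample D Pol K \<delta> \<epsilon> t xs" if "xs \<in> E" "large t" for xs t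
  proof -
    have t: "Suc (t - Suc 0) = t" "0 < t - 1"
      using sixteen_le_sample_size[OF K N \<delta> \<epsilon> \<open>large t\<close>[unfolded large_def]] by auto
    have "card (F (t - 1)) = ?N ^ Suc (m t)"
      using Pol \<open>large t\<close> t by (simp add: F_def card_cartesian_product card_lists_length_eq)
    with dev[OF \<open>xs \<in> E\<close> t(2), of "(\<pi>, ys)" for \<pi> ys] \<open>large t\<close> t show ?thesis
      by (auto simp: good_sample_def F_def g_def m_def add.commute)
  qed
  then show ?thesis using E unfolding large_def by blast
qed

theorem theorem3:
  fixes D :: "'x measure" and A :: "'a set" and Pol :: "('x \<Rightarrow> 'a) set"
    and \<delta> \<epsilon> :: real
  assumes "prob_space D"
    and "finite A" and "A \<noteq> {}"
    and "finite Pol" and "Pol \<noteq> {}"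
    and "\<forall>\<pi>\<in>Pol. \<forall>x. \<pi> x \<in> A"
    and "\<forall>\<pi>\<in>Pol. \<pi> \<in> measurable D (count_space UNIV)"
    and "0 < \<delta>" and "\<delta> < 1"
    and "0 < \<epsilon>" and "\<epsilon> < 1"
  shows "\<exists>E \<in> sets (PiM UNIV (\<lambda>_::nat. D)).
           measure (PiM UNIV (\<lambda>_::nat. D)) E \<ge> 1 - \<delta> \<and>
           (\<forall>xs\<in>E. \<forall>P. is_dist Pol P \<longrightarrow> (\<forall>\<pi>\<in>Pol. \<forall>t::nat.
              real t \<ge> 16 * real (card A) * ln (8 * real (card A) * real (card Pol) / \<delta>) \<longrightarrow>
              V D Pol (card A) \<delta> P \<pi> t
                \<le> (1 + \<epsilon>) * V_hat xs Pol (card A) \<delta> P \<pi> t + 7500 / \<epsilon>^3 * real (card A)))"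
proof -
  have K: "1 \<le> card A" and N: "1 \<le> card Pol"
    using assms(2-5) by (auto simp: Suc_le_eq card_gt_0_iff)
  have agree_meas: "agree \<pi>' \<pi> \<in> borel_measurable D" if "\<pi>' \<in> Pol" "\<pi> \<in> Pol" for \<pi>' \<pi>
    using assms(2,6,7) that by (intro agree_measurable[of A]) auto
  have "V D Pol (card A) \<delta> P \<pi> t \<le> (1 + \<epsilon>) * V_hat xs Pol (card A) \<delta> P \<pi> t + 7500 / \<epsilon>^3 * real (card A)"
    if "16 * real (card A) * ln (8 * real (card A) * real (card Pol) / \<delta>) \<le> real t"
      "is_dist Pol P" "\<pi> \<in> Pol" "good_sample D Pol (card A) \<delta> \<epsilon> t xs" for P \<pi> t xs
    by (rule V_le_V_hat_if_good_sample[OF K N assms(8-11) that(1) assms(1,4) refl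
          agree_meas[OF _ that(3)] that(2-4)])
  with good_sample_event[OF assms(1,4) agree_meas K N assms(8-11)] show ?thesis
    by fastforce
qed

end
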